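(* Let $\mathbb{K}\in\{\mathbb{R},\mathbb{C}\}$ and let $X$ be an infinite-dimensional normed vector space over $\mathbb{K}$. Suppose $o(X)=|X|=\dim X$. Then there exists a (Hamel) basis of $X$ which is a connected and locally connected subset of the unit sphere $\{x\in X:\ \|x\|=1\}$.
   Context: $|S|$ denotes the cardinality of a set $S$. $\dim X$ denotes the algebraic (Hamel) dimension of $X$, i.e. the cardinality of an algebraic basis of $X$ over $\mathbb{K}$. $o(X)$ denotes the cardinality of the family of all open subsets of $X$ (with respect to the norm topology). A basis always means an algebraic (Hamel) basis; connectedness and local connectedness refer to the subspace topology induced by the norm. *)

theory Defs
  imports "HOL-Analysis.Analysis" "HOL-Library.Equipollence"
begin

text \<open>Together with the norm of
  the real normed space this makes the type a complex normed space.\<close>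
definition complex_normed_scaling :: "(complex \<Rightarrow> 'a::real_normed_vector \<Rightarrow> 'a) \<Rightarrow> bool" where
  "complex_normed_scaling scl \<longleftrightarrow>
     vector_space scl \<and>
     (\<forall>r x. scl (complex_of_real r) x = scaleR r x) \<and>
     (\<forall>c x. norm (scl c x) = cmod c * norm x)"

definition hamel_basis :: "('k::field \<Rightarrow> 'a::ab_group_add \<Rightarrow> 'a) \<Rightarrow> 'a set \<Rightarrow> bool" where
  "hamel_basis scl B \<longleftrightarrow>
     \<not> module.dependent scl B \<and> module.span scl B = UNIV"

definition infinite_dimensional :: "('k::field \<Rightarrow> 'a::ab_group_add \<Rightarrow> 'a) \<Rightarrow> bool" where
  "infinite_dimensional scl \<longleftrightarrow>
     \<not> (\<exists>S. finite S \<and> module.span scl S = (UNIV :: 'a set))"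

end

theory Submission
  imports Defs
begin

text \<open>
  Write \<open>S\<close> for the unit sphere. Since \<open>dim X = |X|\<close>, no set \<open>T\<close> of fewer than \<open>|X|\<close>
  vectors spans \<open>X\<close>. Hence \<open>S - span T\<close> is dense in \<open>S\<close>, and two of its points are joined
  inside it by the normalised segments from both to a common vector outside a slightly larger
  span; doing this locally shows that \<open>W \<inter> S - span T\<close> stays connected whenever \<open>W\<close> is open
  and \<open>W \<inter> S\<close> is connected.

  Consider the triples \<open>(W, U, V)\<close> of open sets with \<open>W \<inter> S\<close> connected, \<open>U\<close> and \<open>V\<close>
  disjoint and both meeting \<open>W \<inter> S\<close>. There are at most \<open>o(X) = |X|\<close> of them, and by the
  above no gap \<open>W \<inter> S - (U \<union> V)\<close> is covered by the span of fewer than \<open>|X|\<close> vectors. A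
  transfinite recursion of length at most \<open>|X|\<close> therefore picks from every gap a vector
  independent of the earlier ones; extend these to a maximal independent subset \<open>B\<close> of \<open>S\<close>,
  which spans \<open>X\<close>. As \<open>B\<close> meets every gap, no pair \<open>U\<close>, \<open>V\<close> separates \<open>W \<inter> B\<close>: so
  \<open>W \<inter> B\<close> is connected whenever \<open>W \<inter> S\<close> is, and connectedness and local connectedness
  pass from \<open>S\<close> to \<open>B\<close>.
\<close>

unbundle cardinal_syntax

section \<open>Cardinal arithmetic\<close>

lemma lepoll_iff_card_of_ordLeq: "A \<lesssim> B \<longleftrightarrow> |A| \<le>o |B|"
  by (simp add: lepoll_def card_of_ordLeq[symmetric])

lemma lesspoll_iff_card_of_ordLess: "A \<prec> B \<longleftrightarrow> |A| <o |B|"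
  unfolding lesspoll_def lepoll_iff_card_of_ordLeq eqpoll_iff_card_of_ordIso
  using ordLeq_iff_ordLess_or_ordIso not_ordLess_ordIso ordLess_imp_ordLeq by blast

lemma times_square_lepoll_infinite: "infinite A \<Longrightarrow> A \<times> A \<lesssim> A"
  unfolding lepoll_iff_card_of_ordLeq
  using card_of_Times_same_infinite ordIso_iff_ordLeq by blast

lemma lists_lepoll_infinite:
  assumes "infinite A"
  shows "lists A \<lesssim> A"
proof -
  define L where "L n = {l \<in> lists A. length l = n}" for n
  have "L n \<lesssim> A" for n
  proof (induction n)
    case 0
    have "L 0 = {[]}" by (auto simp: L_def)
    then show ?case
      using assms by (metis finite.emptyI finite_insert finite_lepoll_infinite)
  next
    case (Suc n)
    have "L (Suc n) \<subseteq> (\<lambda>(x, l). x # l) ` (A \<times> L n)"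
      by (auto simp: L_def length_Suc_conv image_iff)
    then have "L (Suc n) \<lesssim> A \<times> L n" by (rule subset_image_lepoll)
    also have "\<dots> \<lesssim> A \<times> A" using Suc.IH by (simp add: times_lepoll_mono)
    also have "\<dots> \<lesssim> A" using assms by (rule times_square_lepoll_infinite)
    finally show ?case .
  qed
  moreover have "lists A = (\<Union>n. L n)" by (auto simp: L_def)
  ultimately show ?thesis
    using assms card_of_UNION_ordLeq_infinite[of A UNIV L]
    by (simp add: lepoll_iff_card_of_ordLeq infinite_le_lepoll)
qed

section \<open>Independent transversals\<close>

context vector_space
begin

lemma independent_lepoll_if_subset_span:
  assumes B: "independent B" "B \<subseteq> span T" and T: "infinite T"
  shows "B \<lesssim> T"
proof -
  have "B \<subseteq> (\<Union>l\<in>lists T. B \<inter> span (set l))"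
  proof
    fix b assume "b \<in> B"
    then obtain t r where t: "finite t" "t \<subseteq> T" "b = (\<Sum>a\<in>t. r a *s a)"
      using B(2) unfolding span_explicit by blast
    obtain l where l: "set l = t" using t(1) finite_list by blast
    have "b \<in> span (set l)"
      unfolding t(3) l by (intro span_sum span_scale span_base)
    then show "b \<in> (\<Union>l\<in>lists T. B \<inter> span (set l))"
      using l t(2) \<open>b \<in> B\<close> by auto
  qed
  moreover have "B \<inter> span (set l) \<lesssim> T" for l
  proof -
    have "independent (B \<inter> span (set l))" using B(1) by (rule independent_mono) simp
    then have "finite (B \<inter> span (set l))"
      using independent_span_bound[of "set l"] by simp
    then show ?thesis using T finite_lepoll_infinite by blast
  qed
  then have "(\<Union>l\<in>lists T. B \<inter> span (set l)) \<lesssim> T"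
    using lists_lepoll_infinite[OF T] unfolding lepoll_iff_card_of_ordLeq
    by (intro card_of_UNION_ordLeq_infinite[OF T]) auto
  ultimately show ?thesis using subset_imp_lepoll lepoll_trans by blast
qed

lemma independent_image_if_not_in_span_underS:
  assumes wo: "wo_rel r" and g: "\<And>\<rho>. \<rho> \<in> Field r \<Longrightarrow> g \<rho> \<notin> span (g ` underS r \<rho>)"
  shows "independent (g ` Field r)"
proof -
  have directed: "independent (g ` A)"
    if A: "wo_rel.ofilter r A" and ind: "\<And>\<sigma>. \<sigma> \<in> A \<Longrightarrow> independent (g ` under r \<sigma>)" for A
  proof -
    have "g ` A = \<Union>((\<lambda>\<sigma>. g ` under r \<sigma>) ` A)"
      using wo_rel.ofilter_under_UNION[OF wo A] by blast
    moreover have "independent (\<Union>((\<lambda>\<sigma>. g ` under r \<sigma>) ` A))"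
    proof (rule independent_Union_directed)
      fix c d assume "c \<in> (\<lambda>\<sigma>. g ` under r \<sigma>) ` A" "d \<in> (\<lambda>\<sigma>. g ` under r \<sigma>) ` A"
      then obtain \<sigma> \<tau> where "c = g ` under r \<sigma>" "d = g ` under r \<tau>" by blast
      moreover have "under r \<sigma> \<subseteq> under r \<tau> \<or> under r \<tau> \<subseteq> under r \<sigma>"
        using wo_rel.ofilter_linord[OF wo wo_rel.under_ofilter[OF wo] wo_rel.under_ofilter[OF wo]] .
      ultimately show "c \<subseteq> d \<or> d \<subseteq> c" by (auto dest: image_mono)
    qed (use ind in blast)
    ultimately show ?thesis by simp
  qed
  have "independent (g ` under r \<rho>)" for \<rho>
  proof (induction \<rho> rule: wo_rel.well_order_induct[OF wo])
    case (1 \<rho>)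
    show ?case
    proof (cases "\<rho> \<in> Field r")
      case True
      have "independent (g ` underS r \<rho>)"
        by (rule directed[OF wo_rel.underS_ofilter[OF wo]]) (use 1 in \<open>simp add: underS_def\<close>)
      then have "independent (insert (g \<rho>) (g ` underS r \<rho>))"
        using g[OF True] by (rule independent_insertI[rotated])
      then show ?thesis
        using Refl_under_underS[OF wo_rel.REFL[OF wo] True] by simp
    next
      case False
      then have "under r \<rho> = {}" by (auto simp: under_def Field_def)
      then show ?thesis using independent_empty by simp
    qed
  qed
  then show ?thesis using directed[OF wo_rel.Field_ofilter[OF wo]] by blast
qed

lemma independent_transversal_exists:
  assumes F: "\<And>\<rho> T. \<rho> \<in> R \<Longrightarrow> T \<prec> R \<Longrightarrow> \<not> F \<rho> \<subseteq> span T"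
  shows "\<exists>g. independent (g ` R) \<and> (\<forall>\<rho>\<in>R. g \<rho> \<in> F \<rho>)"
proof -
  \<comment> \<open>Recursion along the cardinal well-order of \<open>R\<close>: each initial segment has fewer than
    \<open>|R|\<close> elements, so the earlier choices never span all of \<open>F \<rho>\<close>.\<close>
  define r where "r = |R|"
  have wo: "wo_rel r" unfolding r_def by (rule Card_order_wo_rel[OF card_of_Card_order])
  have Field_r: "Field r = R" unfolding r_def by (rule Field_card_of)
  define H where "H f \<rho> = (SOME p. p \<in> F \<rho> \<and> p \<notin> span (f ` underS r \<rho>))"
    for f :: "'c \<Rightarrow> 'b" and \<rho>
  have "wo_rel.adm_wo r H"
    unfolding wo_rel.adm_wo_def[OF wo]
  proof (intro allI impI)
    fix f f' :: "'c \<Rightarrow> 'b" and \<rho>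
    assume "\<forall>\<sigma>\<in>underS r \<rho>. f \<sigma> = f' \<sigma>"
    then have "f ` underS r \<rho> = f' ` underS r \<rho>" by (intro image_cong) auto
    then show "H f \<rho> = H f' \<rho>" by (simp add: H_def)
  qed
  then have g_eq: "wo_rel.worec r H = H (wo_rel.worec r H)"
    by (rule wo_rel.worec_fixpoint[OF wo])
  define g where "g = wo_rel.worec r H"
  have g: "g \<rho> \<in> F \<rho> \<and> g \<rho> \<notin> span (g ` underS r \<rho>)" if "\<rho> \<in> R" for \<rho>
  proof -
    have "underS r \<rho> \<prec> R"
      using card_of_underS[OF card_of_Card_order, of \<rho> R] that
      by (simp add: r_def lesspoll_iff_card_of_ordLess Field_card_of)
    then have "g ` underS r \<rho> \<prec> R" by (rule lesspoll_trans1[OF image_lepoll])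
    then have "\<exists>p. p \<in> F \<rho> \<and> p \<notin> span (g ` underS r \<rho>)" using F[OF that] by blast
    then have "H g \<rho> \<in> F \<rho> \<and> H g \<rho> \<notin> span (g ` underS r \<rho>)"
      unfolding H_def by (rule someI_ex)
    then show ?thesis using g_eq by (simp add: g_def)
  qed
  then have "independent (g ` R)"
    using independent_image_if_not_in_span_underS[OF wo, of g] by (simp add: Field_r)
  then show ?thesis using g by blast
qed

end

section \<open>Connectedness criteria\<close>

lemma connected_if_dense_locally_joinable:
  fixes X Y :: "'a::metric_space set"
  assumes X: "connected X" and Y: "Y \<subseteq> X" "X \<subseteq> closure Y"
    and joinable: "\<And>a. a \<in> X \<Longrightarrow>
      \<exists>\<delta>>0. \<forall>y\<in>Y \<inter> ball a \<delta>. \<forall>z\<in>Y \<inter> ball a \<delta>. connected_component Y y z"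
  shows "connected Y"
proof -
  \<comment> \<open>An equivalence relation on \<open>X\<close>: density of \<open>Y\<close> makes it transitive, and local
    joinability makes it hold near the diagonal.\<close>
  define R where "R a b \<longleftrightarrow>
      (\<exists>\<epsilon>>0. \<forall>y\<in>Y \<inter> ball a \<epsilon>. \<forall>z\<in>Y \<inter> ball b \<epsilon>. connected_component Y y z)" for a b
  have R: "R u v" if "u \<in> X" "v \<in> X" for u v
  proof (rule connected_equivalence_relation[OF X that])
    show "R b a" if "R a b" for a b
    proof -
      obtain \<epsilon> where "\<epsilon> > 0" and ab: "\<forall>y\<in>Y \<inter> ball a \<epsilon>. \<forall>z\<in>Y \<inter> ball b \<epsilon>. connected_component Y y z"
        using \<open>R a b\<close> unfolding R_def by blast
      have "connected_component Y z y" if "z \<in> Y \<inter> ball b \<epsilon>" "y \<in> Y \<inter> ball a \<epsilon>" for y z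
        using ab that by (simp add: connected_component_sym)
      then show ?thesis using \<open>\<epsilon> > 0\<close> unfolding R_def by blast
    qed
  next
    fix a b c assume "R a b" "R b c" "b \<in> X"
    then obtain \<epsilon>1 \<epsilon>2 where \<epsilon>: "\<epsilon>1 > 0" "\<epsilon>2 > 0"
      and ab: "\<forall>y\<in>Y \<inter> ball a \<epsilon>1. \<forall>z\<in>Y \<inter> ball b \<epsilon>1. connected_component Y y z"
      and bc: "\<forall>y\<in>Y \<inter> ball b \<epsilon>2. \<forall>z\<in>Y \<inter> ball c \<epsilon>2. connected_component Y y z"
      unfolding R_def by blast
    have "b \<in> closure Y" using Y(2) \<open>b \<in> X\<close> by blast
    then obtain m where m: "m \<in> Y" "dist m b < min \<epsilon>1 \<epsilon>2"
      using \<epsilon> unfolding closure_approachable by (meson min_less_iff_conj)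
    show "R a c"
      unfolding R_def
    proof (intro exI[of _ "min \<epsilon>1 \<epsilon>2"] conjI ballI)
      fix y z assume y: "y \<in> Y \<inter> ball a (min \<epsilon>1 \<epsilon>2)" and z: "z \<in> Y \<inter> ball c (min \<epsilon>1 \<epsilon>2)"
      have "connected_component Y y m" using ab y m by (simp add: dist_commute)
      moreover have "connected_component Y m z" using bc z m by (simp add: dist_commute)
      ultimately show "connected_component Y y z" by (rule connected_component_trans)
    qed (use \<epsilon> in simp)
  next
    fix a assume "a \<in> X"
    then obtain \<delta> where \<delta>: "\<delta> > 0"
      and join: "\<forall>y\<in>Y \<inter> ball a \<delta>. \<forall>z\<in>Y \<inter> ball a \<delta>. connected_component Y y z"
      using joinable by blast
    have "R a b" if "b \<in> ball a (\<delta>/2)" for b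
      unfolding R_def
    proof (intro exI[of _ "\<delta>/2"] conjI ballI)
      fix y z assume "y \<in> Y \<inter> ball a (\<delta>/2)" "z \<in> Y \<inter> ball b (\<delta>/2)"
      moreover have "ball b (\<delta>/2) \<subseteq> ball a \<delta>"
        using that dist_triangle_half_l[of a b \<delta>] by (auto simp: dist_commute)
      moreover have "ball a (\<delta>/2) \<subseteq> ball a \<delta>" using \<delta> by (intro subset_ball) simp
      ultimately show "connected_component Y y z" using join by blast
    qed (use \<delta> in simp)
    moreover have "openin (top_of_set X) (X \<inter> ball a (\<delta>/2))" by (simp add: openin_open_Int)
    moreover have "a \<in> X \<inter> ball a (\<delta>/2)" using \<open>a \<in> X\<close> \<delta> by simp
    ultimately show "\<exists>T. openin (top_of_set X) T \<and> a \<in> T \<and> (\<forall>b\<in>T. R a b)" by blast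
  qed
  have "connected_component Y u v" if "u \<in> Y" "v \<in> Y" for u v
  proof -
    have "R u v" using R that Y(1) by blast
    then obtain \<epsilon> where "\<epsilon> > 0"
      and "\<forall>y\<in>Y \<inter> ball u \<epsilon>. \<forall>z\<in>Y \<inter> ball v \<epsilon>. connected_component Y y z"
      unfolding R_def by blast
    then show ?thesis using that by simp
  qed
  then show ?thesis unfolding connected_iff_connected_component by blast
qed

definition separating_triples :: "'a::topological_space set \<Rightarrow> ('a set \<times> 'a set \<times> 'a set) set"
  where "separating_triples S = {(W, U, V). open W \<and> open U \<and> open V \<and> disjnt U V \<and>
      connected (W \<inter> S) \<and> U \<inter> W \<inter> S \<noteq> {} \<and> V \<inter> W \<inter> S \<noteq> {}}"

definition gap :: "'a set \<Rightarrow> 'a set \<times> 'a set \<times> 'a set \<Rightarrow> 'a set"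
  where "gap S = (\<lambda>(W, U, V). W \<inter> S - (U \<union> V))"

lemma gap_subset: "gap S \<rho> \<subseteq> S"
  by (auto simp: gap_def split: prod.splits)

lemma connected_Int_if_meets_gaps:
  fixes S B :: "'a::metric_space set"
  assumes B: "B \<subseteq> S" and meets: "\<And>\<rho>. \<rho> \<in> separating_triples S \<Longrightarrow> B \<inter> gap S \<rho> \<noteq> {}"
    and W: "open W" "connected (W \<inter> S)"
  shows "connected (W \<inter> B)"
proof (rule ccontr)
  assume "\<not> connected (W \<inter> B)"
  then obtain e1 e2 where e: "open e1" "open e2" "W \<inter> B \<subseteq> e1 \<union> e2" "e1 \<inter> e2 \<inter> (W \<inter> B) = {}"
      "e1 \<inter> (W \<inter> B) \<noteq> {}" "e2 \<inter> (W \<inter> B) \<noteq> {}"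
    unfolding connected_def by blast
  define P Q where "P = e1 \<inter> (W \<inter> B)" and "Q = e2 \<inter> (W \<inter> B)"
  have "e1 \<inter> Q = {}" "e2 \<inter> P = {}" using e(4) by (auto simp: P_def Q_def)
  then have "P \<inter> closure Q = {}" "Q \<inter> closure P = {}"
    using open_Int_closure_eq_empty[OF e(1), of Q] open_Int_closure_eq_empty[OF e(2), of P]
    by (auto simp: P_def Q_def)
  then have "separatedin euclidean P Q" by (simp add: separatedin_def)
  then obtain U V where UV: "open U" "open V" "P \<subseteq> U" "Q \<subseteq> V" "disjnt U V"
    using metrizable_space_separation[OF metrizable_space_euclidean] by force
  have "U \<inter> W \<inter> S \<noteq> {}" "V \<inter> W \<inter> S \<noteq> {}"
    using UV(3,4) e(5,6) B unfolding P_def Q_def by blast+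
  then have "(W, U, V) \<in> separating_triples S"
    using W UV by (simp add: separating_triples_def)
  from meets[OF this] obtain b where "b \<in> B" "b \<in> gap S (W, U, V)" by blast
  then have b: "b \<in> B" "b \<in> W" "b \<notin> U" "b \<notin> V" by (simp_all add: gap_def)
  then have "b \<in> P \<union> Q" unfolding P_def Q_def using e(3) by blast
  then show False using b(3,4) UV(3,4) by blast
qed

lemma locally_connected_if_meets_gaps:
  fixes S B :: "'a::metric_space set"
  assumes B: "B \<subseteq> S" and meets: "\<And>\<rho>. \<rho> \<in> separating_triples S \<Longrightarrow> B \<inter> gap S \<rho> \<noteq> {}"
    and S: "locally connected S"
  shows "locally connected B"
  unfolding locally_connected
proof (intro allI impI)
  fix v x assume "openin (top_of_set B) v \<and> x \<in> v"
  then obtain G where G: "open G" "v = B \<inter> G" "x \<in> v" by (auto simp: openin_open)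
  define C where "C = connected_component_set (S \<inter> G) x"
  have "openin (top_of_set S) C"
    unfolding C_def using G B by (intro locally_connected_2[OF S]) (auto simp: openin_open_Int)
  then obtain W0 where W0: "open W0" "C = S \<inter> W0" by (auto simp: openin_open)
  define W where "W = W0 \<inter> G"
  have W: "open W" using W0(1) G(1) by (simp add: W_def open_Int)
  have "W \<inter> S = C"
    using W0 connected_component_subset[of "S \<inter> G" x] by (auto simp: W_def C_def)
  then have "connected (B \<inter> W)"
    using connected_Int_if_meets_gaps[OF B meets W] by (simp add: C_def Int_commute)
  moreover have "x \<in> S \<inter> G" using G B by blast
  then have "x \<in> C" by (simp add: C_def)
  then have "x \<in> B \<inter> W" using G W0(2) by (simp add: W_def)
  moreover have "B \<inter> W \<subseteq> v" using G(2) by (auto simp: W_def)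
  ultimately show "\<exists>u. openin (top_of_set B) u \<and> connected u \<and> x \<in> u \<and> u \<subseteq> v"
    using openin_open_Int[OF W] by blast
qed

section \<open>Unit vectors outside a span\<close>

lemma dist_normalize_le:
  fixes a p :: "'a::real_normed_vector"
  assumes a: "norm a = 1" and p: "p \<noteq> 0"
  shows "dist (p /\<^sub>R norm p) a \<le> 2 * dist p a"
proof -
  have "norm (p /\<^sub>R norm p - p) = \<bar>1 - norm p\<bar>"
  proof -
    have "p /\<^sub>R norm p - p = (inverse (norm p) - 1) *\<^sub>R p" by (simp add: algebra_simps)
    also have "norm \<dots> = \<bar>inverse (norm p) - 1\<bar> * norm p" by simp
    also have "\<dots> = \<bar>1 - norm p\<bar>" using p by (simp add: abs_mult_pos' field_simps abs_minus_commute)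
    finally show ?thesis .
  qed
  also have "\<dots> \<le> dist p a" using a norm_triangle_ineq3[of p a] by (simp add: dist_norm abs_minus_commute)
  finally show ?thesis
    using dist_triangle[of "p /\<^sub>R norm p" a p] by (simp add: dist_norm)
qed

locale scalar_extension = vector_space scale
  for scale :: "'k::real_field \<Rightarrow> 'a::real_normed_vector \<Rightarrow> 'a" +
  assumes scale_of_real: "scale (of_real r) x = r *\<^sub>R x"
begin

lemma span_scaleR: "x \<in> span T \<Longrightarrow> r *\<^sub>R x \<in> span T"
  by (metis scale_of_real span_scale)

lemma scaleR_in_span_iff: "r \<noteq> 0 \<Longrightarrow> r *\<^sub>R x \<in> span T \<longleftrightarrow> x \<in> span T"
  by (metis span_scaleR scaleR_scaleR left_inverse scaleR_one)

lemma span_eq_UNIV_if_sphere_subset: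
  assumes "sphere 0 1 \<subseteq> span B"
  shows "span B = UNIV"
proof -
  have "x \<in> span B" for x
  proof (cases "x = 0")
    case False
    then have "x /\<^sub>R norm x \<in> sphere 0 1" by simp
    then have "x /\<^sub>R norm x \<in> span B" using assms by blast
    then show ?thesis using False scaleR_in_span_iff[of "inverse (norm x)"] by simp
  qed (simp add: span_zero)
  then show ?thesis by blast
qed

lemma closed_segment_Int_span_empty:
  assumes q: "q \<notin> span T" and m: "m \<notin> span (insert q T)"
  shows "closed_segment q m \<inter> span T = {}"
proof -
  have "p \<notin> span T" if "p \<in> closed_segment q m" for p
  proof
    assume p: "p \<in> span T"
    obtain u where u: "0 \<le> u" "u \<le> 1" "p = (1 - u) *\<^sub>R q + u *\<^sub>R m"
      using \<open>p \<in> closed_segment q m\<close> unfolding closed_segment_def by blast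
    show False
    proof (cases "u = 0")
      case True
      then show False using q p u(3) by simp
    next
      case False
      have "u *\<^sub>R m = p - (1 - u) *\<^sub>R q" using u(3) by simp
      moreover have "p - (1 - u) *\<^sub>R q \<in> span (insert q T)"
        using p by (intro span_diff span_scaleR) (auto intro: span_base span_mono[THEN subsetD])
      ultimately show False using m False scaleR_in_span_iff by metis
    qed
  qed
  then show ?thesis by blast
qed

lemma normalize_image_subset_sphere_minus_span:
  assumes "S \<inter> span T = {}"
  shows "(\<lambda>x. x /\<^sub>R norm x) ` S \<subseteq> sphere 0 1 - span T"
proof
  fix y assume "y \<in> (\<lambda>x. x /\<^sub>R norm x) ` S"
  then obtain x where x: "x \<in> S" "y = x /\<^sub>R norm x" by blast
  then have "x \<noteq> 0" "x \<notin> span T" using assms span_zero by auto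
  then show "y \<in> sphere 0 1 - span T"
    using x(2) scaleR_in_span_iff[of "inverse (norm x)"] by simp
qed

lemma connected_join_sphere_minus_span:
  assumes y: "y \<in> sphere 0 1 - span T" and z: "z \<in> sphere 0 1 - span T"
    and m: "m \<notin> span (insert y (insert z T))"
  defines "C \<equiv> (\<lambda>x. x /\<^sub>R norm x) ` (closed_segment y m \<union> closed_segment z m)"
  shows "connected C" "y \<in> C" "z \<in> C" "C \<subseteq> sphere 0 1 - span T"
proof -
  have disjoint: "closed_segment q m \<inter> span T = {}" if "q \<in> {y, z}" for q
  proof (rule closed_segment_Int_span_empty)
    show "q \<notin> span T" using that y z by auto
    have "span (insert q T) \<subseteq> span (insert y (insert z T))"
      using that by (intro span_mono) auto
    then show "m \<notin> span (insert q T)" using m by blast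
  qed
  then have "0 \<notin> closed_segment q m" if "q \<in> {y, z}" for q
    using that span_zero by blast
  then have "connected ((\<lambda>x. x /\<^sub>R norm x) ` closed_segment q m)" if "q \<in> {y, z}" for q
    using that by (intro connected_continuous_image continuous_intros) auto
  then show "connected C"
    unfolding C_def image_Un by (intro connected_Un) auto
  show "y \<in> C" "z \<in> C"
    using y z unfolding C_def by (auto intro: image_eqI[of _ _ y] image_eqI[of _ _ z])
  show "C \<subseteq> sphere 0 1 - span T"
    using disjoint unfolding C_def image_Un
    by (intro Un_least normalize_image_subset_sphere_minus_span) auto
qed

end

section \<open>Spaces whose small subsets do not span\<close>

text \<open>This is the only way the hypothesis \<open>dim X = |X|\<close> enters.\<close>

locale small_spans_proper = scalar_extension scale
  for scale :: "'k::real_field \<Rightarrow> 'a::real_normed_vector \<Rightarrow> 'a" +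
  assumes span_neq_UNIV_if_lesspoll: "T \<prec> (UNIV :: 'a set) \<Longrightarrow> span T \<noteq> UNIV"
begin

lemma exists_not_in_span: "T \<prec> (UNIV :: 'a set) \<Longrightarrow> \<exists>w. w \<notin> span T"
  using span_neq_UNIV_if_lesspoll[of T] by auto

lemma infinite_UNIV: "infinite (UNIV :: 'a set)"
proof -
  have "{} \<prec> (UNIV :: 'a set)"
    by (metis UNIV_not_empty eqpoll_empty_iff_empty eqpoll_sym empty_lepoll lesspoll_def)
  then obtain x where "x \<notin> span {}" using exists_not_in_span by blast
  then have "inj (\<lambda>r::real. r *\<^sub>R x)" by (intro injI) simp
  then have "infinite (range (\<lambda>r::real. r *\<^sub>R x))"
    using finite_imageD infinite_UNIV_char_0[where 'a=real] by blast
  then show ?thesis by (rule infinite_super[OF subset_UNIV])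
qed

lemma insert_lesspoll_UNIV:
  assumes "T \<prec> (UNIV :: 'a set)"
  shows "insert x T \<prec> (UNIV :: 'a set)"
proof (cases "finite T")
  case True
  then show ?thesis using infinite_UNIV by (simp add: finite_lesspoll_infinite)
next
  case False
  then show ?thesis by (rule eq_lesspoll_trans[OF infinite_insert_eqpoll assms])
qed

lemma sphere_subset_closure_sphere_minus_span:
  assumes T: "T \<prec> (UNIV :: 'a set)"
  shows "sphere 0 1 \<subseteq> closure (sphere 0 1 - span T)"
proof
  fix a :: 'a assume a: "a \<in> sphere 0 1"
  show "a \<in> closure (sphere 0 1 - span T)"
  proof (cases "a \<in> span T")
    case False
    then show ?thesis using a by (intro closure_subset[THEN subsetD]) simp
  next
    case True
    obtain w where w: "w \<notin> span T" using exists_not_in_span[OF T] by blast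
    then have "w \<noteq> 0" by (metis span_zero)
    show ?thesis
      unfolding closure_approachable
    proof (intro allI impI)
      fix \<epsilon> :: real assume "\<epsilon> > 0"
      define p where "p = a + (\<epsilon> / (4 * norm w)) *\<^sub>R w"
      have "p \<notin> span T"
      proof
        assume "p \<in> span T"
        from span_diff[OF this True]
        have "(\<epsilon> / (4 * norm w)) *\<^sub>R w \<in> span T" by (simp add: p_def)
        then show False
          using scaleR_in_span_iff[of "\<epsilon> / (4 * norm w)" w T] w \<open>\<epsilon> > 0\<close> \<open>w \<noteq> 0\<close> by simp
      qed
      then have "p \<noteq> 0" by (metis span_zero)
      have "dist p a = \<epsilon> / 4" using \<open>w \<noteq> 0\<close> \<open>\<epsilon> > 0\<close> by (simp add: p_def dist_norm)
      moreover have "dist (p /\<^sub>R norm p) a \<le> 2 * dist p a"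
        using a \<open>p \<noteq> 0\<close> by (intro dist_normalize_le) simp
      ultimately have "dist (p /\<^sub>R norm p) a < \<epsilon>" using \<open>\<epsilon> > 0\<close> by simp
      moreover have "p /\<^sub>R norm p \<in> sphere 0 1 - span T"
        using normalize_image_subset_sphere_minus_span[of "{p}" T] \<open>p \<notin> span T\<close> by simp
      ultimately show "\<exists>y\<in>sphere 0 1 - span T. dist y a < \<epsilon>" by (intro bexI)
    qed
  qed
qed

lemma open_Int_sphere_subset_closure:
  assumes "open W" "T \<prec> (UNIV :: 'a set)"
  shows "W \<inter> sphere 0 1 \<subseteq> closure (W \<inter> sphere 0 1 - span T)"
proof -
  have "W \<inter> sphere 0 1 \<subseteq> W \<inter> closure (sphere 0 1 - span T)"
    using sphere_subset_closure_sphere_minus_span[OF assms(2)] by blast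
  also have "\<dots> \<subseteq> closure (W \<inter> (sphere 0 1 - span T))"
    by (rule open_Int_closure_subset[OF assms(1)])
  finally show ?thesis by (simp add: Int_Diff)
qed

lemma connected_sphere: "connected (sphere (0 :: 'a) 1)"
  unfolding connected_iff_connected_component
proof (intro ballI)
  fix x y :: 'a assume "x \<in> sphere 0 1" "y \<in> sphere 0 1"
  then have xy: "x \<in> sphere 0 1 - span {}" "y \<in> sphere 0 1 - span {}" by auto
  have "{x, y} \<prec> (UNIV :: 'a set)"
    by (rule finite_lesspoll_infinite[OF infinite_UNIV]) simp
  then obtain w where "w \<notin> span (insert x (insert y {}))"
    using exists_not_in_span by blast
  note join = connected_join_sphere_minus_span[OF xy this]
  show "connected_component (sphere 0 1) x y"
    by (rule connected_componentI[OF join(1) _ join(2,3)]) (use join(4) in blast)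
qed

lemma sphere_minus_span_locally_joinable:
  assumes a: "a \<in> sphere 0 1" and W: "open W" "a \<in> W" and T: "T \<prec> (UNIV :: 'a set)"
  shows "\<exists>\<delta>>0. \<forall>y\<in>(sphere 0 1 - span T) \<inter> ball a \<delta>. \<forall>z\<in>(sphere 0 1 - span T) \<inter> ball a \<delta>.
           connected_component (W \<inter> sphere 0 1 - span T) y z"
proof -
  obtain r where r: "r > 0" "ball a r \<subseteq> W" using W open_contains_ball by blast
  define \<delta> where "\<delta> = min (r/4) (1/4)"
  have \<delta>: "\<delta> > 0" "4 * \<delta> \<le> r" "4 * \<delta> \<le> 1" using r by (auto simp: \<delta>_def)
  have normalize_ball: "(\<lambda>x. x /\<^sub>R norm x) ` ball a (2 * \<delta>) \<subseteq> W"
  proof (intro image_subsetI)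
    fix p assume p: "p \<in> ball a (2 * \<delta>)"
    then have "p \<noteq> 0" using a \<delta> by auto
    then have "dist (p /\<^sub>R norm p) a \<le> 2 * dist p a" using a by (intro dist_normalize_le) simp
    also have "\<dots> < r" using p \<delta> by (simp add: dist_commute)
    finally show "p /\<^sub>R norm p \<in> W" using r(2) by (auto simp: dist_commute)
  qed
  have "connected_component (W \<inter> sphere 0 1 - span T) y z"
    if y: "y \<in> (sphere 0 1 - span T) \<inter> ball a \<delta>" and z: "z \<in> (sphere 0 1 - span T) \<inter> ball a \<delta>"
    for y z
  proof -
    let ?T = "insert y (insert z T)"
    have "?T \<prec> (UNIV :: 'a set)" using T by (intro insert_lesspoll_UNIV)
    then obtain w where w: "w \<notin> span ?T" using exists_not_in_span by blast
    then have "w \<noteq> 0" by (metis span_zero)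
    define t where "t = \<delta> / (2 * norm w)"
    have "t > 0" "norm (t *\<^sub>R w) = \<delta> / 2" using \<delta> \<open>w \<noteq> 0\<close> by (auto simp: t_def)
    \<comment> \<open>Pushing the midpoint off the span keeps both segments inside \<open>ball a (2 * \<delta>)\<close>.\<close>
    define m where "m = midpoint y z + t *\<^sub>R w"
    have mid: "midpoint y z \<in> span ?T"
      unfolding midpoint_def by (intro span_scaleR span_add span_base) auto
    have m: "m \<notin> span ?T"
    proof
      assume "m \<in> span ?T"
      from span_diff[OF this mid] have "t *\<^sub>R w \<in> span ?T" by (simp add: m_def)
      then show False using scaleR_in_span_iff[of t w ?T] w \<open>t > 0\<close> by simp
    qed
    have "closed_segment y z \<subseteq> ball a \<delta>"
      using y z by (intro closed_segment_subset convex_ball) auto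
    from subsetD[OF this midpoint_in_closed_segment] have "dist a (midpoint y z) < \<delta>" by simp
    moreover have "dist a m \<le> dist a (midpoint y z) + norm (t *\<^sub>R w)"
      using dist_triangle[of a m "midpoint y z"] by (simp add: m_def dist_norm)
    ultimately have "dist a m < 2 * \<delta>"
      using \<open>norm (t *\<^sub>R w) = \<delta> / 2\<close> \<delta>(1) by linarith
    moreover have "y \<in> ball a (2 * \<delta>)" "z \<in> ball a (2 * \<delta>)" using y z \<delta> by auto
    ultimately have "closed_segment q m \<subseteq> ball a (2 * \<delta>)" if "q \<in> {y, z}" for q
      using that by (intro closed_segment_subset convex_ball) auto
    then have "closed_segment y m \<union> closed_segment z m \<subseteq> ball a (2 * \<delta>)" by blast
    then have "(\<lambda>x. x /\<^sub>R norm x) ` (closed_segment y m \<union> closed_segment z m) \<subseteq> W"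
      using normalize_ball by blast
    moreover have "y \<in> sphere 0 1 - span T" "z \<in> sphere 0 1 - span T" using y z by auto
    note join = connected_join_sphere_minus_span[OF this m]
    ultimately show ?thesis
      by (intro connected_componentI[OF join(1) _ join(2,3)]) (use join(4) in blast)
  qed
  then show ?thesis using \<delta>(1) by blast
qed

lemma locally_connected_sphere: "locally connected (sphere (0 :: 'a) 1)"
  unfolding locally_connected_im_kleinen
proof (intro allI impI)
  fix v and x :: 'a assume "openin (top_of_set (sphere 0 1)) v \<and> x \<in> v"
  then obtain W where W: "open W" "v = sphere 0 1 \<inter> W" "x \<in> v" by (auto simp: openin_open)
  then have x: "x \<in> sphere 0 1" "x \<in> W" by auto
  have "{} \<prec> (UNIV :: 'a set)" by (rule finite_lesspoll_infinite[OF infinite_UNIV]) simp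
  from sphere_minus_span_locally_joinable[OF x(1) W(1) x(2) this]
  obtain \<delta> where "\<delta> > 0" and join: "\<forall>y\<in>(sphere 0 1 - span {}) \<inter> ball x \<delta>.
      \<forall>z\<in>(sphere 0 1 - span {}) \<inter> ball x \<delta>. connected_component (W \<inter> sphere 0 1 - span {}) y z"
    by blast
  have "v \<inter> ball x \<delta> = sphere 0 1 \<inter> (W \<inter> ball x \<delta>)" by (simp add: W(2) Int_assoc)
  then have open_u: "openin (top_of_set (sphere 0 1)) (v \<inter> ball x \<delta>)"
    using W(1) by (simp add: openin_open_Int open_Int)
  have paths: "\<exists>c. connected c \<and> c \<subseteq> v \<and> x \<in> c \<and> y \<in> c" if y: "y \<in> v \<inter> ball x \<delta>" for y
  proof -
    have "x \<in> (sphere 0 1 - span {}) \<inter> ball x \<delta>" "y \<in> (sphere 0 1 - span {}) \<inter> ball x \<delta>"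
      using x y W(2) \<open>\<delta> > 0\<close> by auto
    then have "connected_component (W \<inter> sphere 0 1 - span {}) x y" using join by blast
    then obtain c where "connected c" "c \<subseteq> W \<inter> sphere 0 1 - span {}" "x \<in> c" "y \<in> c"
      unfolding connected_component_def by blast
    then show ?thesis using W(2) by (intro exI[of _ c]) auto
  qed
  show "\<exists>u. openin (top_of_set (sphere 0 1)) u \<and> x \<in> u \<and> u \<subseteq> v \<and>
      (\<forall>y. y \<in> u \<longrightarrow> (\<exists>c. connected c \<and> c \<subseteq> v \<and> x \<in> c \<and> y \<in> c))"
  proof (rule exI[of _ "v \<inter> ball x \<delta>"], intro conjI allI impI)
    show "x \<in> v \<inter> ball x \<delta>" using W(3) \<open>\<delta> > 0\<close> by simp
  qed (use open_u paths in auto)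
qed

lemma connected_open_Int_sphere_minus_span:
  assumes W: "open W" "connected (W \<inter> sphere 0 1)" and T: "T \<prec> (UNIV :: 'a set)"
  shows "connected (W \<inter> sphere 0 1 - span T)"
proof (rule connected_if_dense_locally_joinable[OF W(2) Diff_subset])
  show "W \<inter> sphere 0 1 \<subseteq> closure (W \<inter> sphere 0 1 - span T)"
    by (rule open_Int_sphere_subset_closure[OF W(1) T])
  fix a assume "a \<in> W \<inter> sphere 0 1"
  then have a: "a \<in> sphere 0 1" "a \<in> W" by auto
  from sphere_minus_span_locally_joinable[OF a(1) W(1) a(2) T]
  obtain \<delta> where "\<delta> > 0" and join: "\<forall>y\<in>(sphere 0 1 - span T) \<inter> ball a \<delta>.
      \<forall>z\<in>(sphere 0 1 - span T) \<inter> ball a \<delta>. connected_component (W \<inter> sphere 0 1 - span T) y z"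
    by blast
  have "(W \<inter> sphere 0 1 - span T) \<inter> ball a \<delta> \<subseteq> (sphere 0 1 - span T) \<inter> ball a \<delta>" by blast
  then have "\<forall>y\<in>(W \<inter> sphere 0 1 - span T) \<inter> ball a \<delta>. \<forall>z\<in>(W \<inter> sphere 0 1 - span T) \<inter> ball a \<delta>.
      connected_component (W \<inter> sphere 0 1 - span T) y z"
    using join by (meson subsetD)
  then show "\<exists>\<delta>>0. \<forall>y\<in>(W \<inter> sphere 0 1 - span T) \<inter> ball a \<delta>. \<forall>z\<in>(W \<inter> sphere 0 1 - span T) \<inter> ball a \<delta>.
      connected_component (W \<inter> sphere 0 1 - span T) y z"
    using \<open>\<delta> > 0\<close> by (intro exI[of _ \<delta>]) simp
qed

lemma gap_not_subset_span:
  assumes \<rho>: "\<rho> \<in> separating_triples (sphere 0 1)" and T: "T \<prec> (UNIV :: 'a set)"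
  shows "\<not> gap (sphere 0 1) \<rho> \<subseteq> span T"
proof
  obtain W U V where \<rho>_eq: "\<rho> = (W, U, V)" by (metis prod_cases3)
  let ?Y = "W \<inter> sphere 0 1 - span T"
  have W: "open W" "connected (W \<inter> sphere 0 1)" and UV: "open U" "open V" "disjnt U V"
    and meet: "U \<inter> W \<inter> sphere 0 1 \<noteq> {}" "V \<inter> W \<inter> sphere 0 1 \<noteq> {}"
    using \<rho> by (auto simp: \<rho>_eq separating_triples_def)
  have dense: "W \<inter> sphere 0 1 \<subseteq> closure ?Y" by (rule open_Int_sphere_subset_closure[OF W(1) T])
  have "U \<inter> closure ?Y \<noteq> {}" "V \<inter> closure ?Y \<noteq> {}" using meet dense by blast+
  then have U_Y: "U \<inter> ?Y \<noteq> {}" and V_Y: "V \<inter> ?Y \<noteq> {}"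
    by (simp_all add: open_Int_closure_eq_empty[OF UV(1)] open_Int_closure_eq_empty[OF UV(2)])
  assume "gap (sphere 0 1) \<rho> \<subseteq> span T"
  then have cover: "?Y \<subseteq> U \<union> V" by (auto simp: \<rho>_eq gap_def)
  have "U \<inter> V \<inter> ?Y = {}" using UV(3) by (auto simp: disjnt_def)
  from connectedD[OF connected_open_Int_sphere_minus_span[OF W T] UV(1,2) this cover]
  show False using U_Y V_Y by blast
qed

theorem exists_connected_locally_connected_basis:
  assumes opens: "{U :: 'a set. open U} \<lesssim> (UNIV :: 'a set)"
  shows "\<exists>B. hamel_basis scale B \<and> B \<subseteq> sphere 0 1 \<and> connected B \<and> locally connected B"
proof -
  let ?S = "sphere (0 :: 'a) 1"
  let ?R = "separating_triples ?S"
  have "?R \<lesssim> {U :: 'a set. open U} \<times> {U :: 'a set. open U} \<times> {U :: 'a set. open U}"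
    by (intro subset_imp_lepoll) (auto simp: separating_triples_def)
  also have "\<dots> \<lesssim> (UNIV :: 'a set) \<times> (UNIV :: 'a set) \<times> (UNIV :: 'a set)"
    by (intro times_lepoll_mono opens)
  also have "\<dots> \<lesssim> (UNIV :: 'a set) \<times> (UNIV :: 'a set)"
    by (intro times_lepoll_mono lepoll_refl times_square_lepoll_infinite infinite_UNIV)
  also have "\<dots> \<lesssim> (UNIV :: 'a set)"
    by (intro times_square_lepoll_infinite infinite_UNIV)
  finally have R: "?R \<lesssim> (UNIV :: 'a set)" .
  have "\<not> gap ?S \<rho> \<subseteq> span T" if "\<rho> \<in> ?R" "T \<prec> ?R" for \<rho> T
    using gap_not_subset_span[OF that(1) lesspoll_trans2[OF that(2) R]] .
  from independent_transversal_exists[of ?R "gap ?S", OF this]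
  obtain g where g: "independent (g ` ?R)" "\<forall>\<rho>\<in>?R. g \<rho> \<in> gap ?S \<rho>"
    by blast
  have "g ` ?R \<subseteq> ?S"
  proof (rule image_subsetI)
    fix \<rho> assume "\<rho> \<in> ?R"
    with g(2) have "g \<rho> \<in> gap ?S \<rho>" by blast
    then show "g \<rho> \<in> ?S" by (rule subsetD[OF gap_subset])
  qed
  from maximal_independent_subset_extend[OF this g(1)]
  obtain B where B: "g ` ?R \<subseteq> B" "B \<subseteq> ?S" "independent B" "?S \<subseteq> span B"
    by blast
  have meets: "B \<inter> gap ?S \<rho> \<noteq> {}" if "\<rho> \<in> ?R" for \<rho>
    using g(2) B(1) that by blast
  have "hamel_basis scale B"
    unfolding hamel_basis_def using B(3) span_eq_UNIV_if_sphere_subset[OF B(4)] by simp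
  moreover have "connected B"
    using connected_Int_if_meets_gaps[OF B(2) meets open_UNIV] connected_sphere by simp
  moreover have "locally connected B"
    by (rule locally_connected_if_meets_gaps[OF B(2) meets locally_connected_sphere])
  ultimately show ?thesis using B(2) by (intro exI[of _ B]) simp
qed

end

lemma (in scalar_extension) small_spans_proper_if_independent_eqpoll_UNIV:
  assumes inf: "infinite_dimensional scale" and B: "independent B" "B \<approx> (UNIV :: 'a set)"
  shows "small_spans_proper scale"
proof unfold_locales
  fix T :: "'a set" assume T: "T \<prec> (UNIV :: 'a set)"
  show "span T \<noteq> UNIV"
  proof
    assume span_T: "span T = UNIV"
    then have "infinite T" using inf by (auto simp: infinite_dimensional_def)
    then have "B \<lesssim> T" using independent_lepoll_if_subset_span[OF B(1)] span_T by simp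
    then have "(UNIV :: 'a set) \<prec> (UNIV :: 'a set)"
      using lesspoll_trans1[OF lepoll_trans1[OF eqpoll_sym[OF B(2)]] T] by blast
    then show False by simp
  qed
qed

lemma exists_connected_locally_connected_basis_if_dim_eq_card:
  fixes scl :: "'k::real_field \<Rightarrow> 'a::real_normed_vector \<Rightarrow> 'a"
  assumes "scalar_extension scl" "infinite_dimensional scl"
    and "{U :: 'a set. open U} \<approx> (UNIV :: 'a set)"
    and "\<exists>B. hamel_basis scl B \<and> B \<approx> (UNIV :: 'a set)"
  shows "\<exists>B. hamel_basis scl B \<and> B \<subseteq> sphere 0 1 \<and> connected B \<and> locally connected B"
proof -
  obtain B where B: "hamel_basis scl B" "B \<approx> (UNIV :: 'a set)" using assms(4) by blast
  then have "\<not> module.dependent scl B" by (simp add: hamel_basis_def)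
  then have "small_spans_proper scl"
    by (rule scalar_extension.small_spans_proper_if_independent_eqpoll_UNIV[OF assms(1,2) _ B(2)])
  then show ?thesis
    by (rule small_spans_proper.exists_connected_locally_connected_basis[OF _ eqpoll_imp_lepoll[OF assms(3)]])
qed

theorem theorem1:
  fixes dummy :: "'a::real_normed_vector"
  shows
    "(infinite_dimensional (scaleR :: real \<Rightarrow> 'a \<Rightarrow> 'a) \<and>
      {U::'a set. open U} \<approx> (UNIV :: 'a set) \<and>
      (\<exists>B. hamel_basis (scaleR :: real \<Rightarrow> 'a \<Rightarrow> 'a) B \<and> B \<approx> (UNIV :: 'a set))
      \<longrightarrow> (\<exists>B. hamel_basis (scaleR :: real \<Rightarrow> 'a \<Rightarrow> 'a) B \<and> B \<subseteq> sphere 0 1 \<and>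
                connected B \<and> locally connected B))
     \<and>
     (\<forall>scl :: complex \<Rightarrow> 'a \<Rightarrow> 'a.
      complex_normed_scaling scl \<and>
      infinite_dimensional scl \<and>
      {U::'a set. open U} \<approx> (UNIV :: 'a set) \<and>
      (\<exists>B. hamel_basis scl B \<and> B \<approx> (UNIV :: 'a set))
      \<longrightarrow> (\<exists>B. hamel_basis scl B \<and> B \<subseteq> sphere 0 1 \<and>
                connected B \<and> locally connected B))"
proof -
  have real: "scalar_extension (scaleR :: real \<Rightarrow> 'a \<Rightarrow> 'a)"
    by (simp add: scalar_extension_def scalar_extension_axioms_def real_vector.vector_space_axioms)
  have complex: "scalar_extension scl" if "complex_normed_scaling scl" for scl :: "complex \<Rightarrow> 'a \<Rightarrow> 'a"
    using that by (simp add: complex_normed_scaling_def scalar_extension_def scalar_extension_axioms_def)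
  show ?thesis
    using exists_connected_locally_connected_basis_if_dim_eq_card[OF real]
      exists_connected_locally_connected_basis_if_dim_eq_card[OF complex]
    by blast
qed

end
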